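(* Let $F=\langle f_1,\ldots,f_k\rangle$ be a normalized solution to an instance $(\mathcal{T}_{initial},\mathcal{T}_{final},k)$ of Flip Distance, and let $C$ be a component of $\mathcal{D}_F$. Let $f_i$ and $f_h$, with $i<h$, be two flips in $C$ such that $\epsilon(f_i)=\epsilon(f_h)$. Then there is a directed path from $f_i$ to $f_h$ in $C$.
   Context: A triangulation of a finite point set $\mathcal{P}$ in the plane is a partition of the convex hull of $\mathcal{P}$ into triangles whose vertex set is $\mathcal{P}$. For an interior edge $e$ of a triangulation $\mathcal{T}$, the quadrilateral associated with $e$ is the union of the two triangles of $\mathcal{T}$ sharing $e$. A flip $f$ with underlying edge $\epsilon(f)=e$ is admissible in $\mathcal{T}$ if $e\in\mathcal{T}$ and its associated quadrilateral is convex; performing it replaces $e$ by the other diagonal $\phi(f)$ of that quadrilateral. Two distinct edges share a triangle in $\mathcal{T}$ if they are edges of the same triangle of $\mathcal{T}$. A sequence $F=\langle f_1,\ldots,f_r\rangle$ is valid with respect to $\mathcal{T}$ if there are triangulations $\mathcal{T}_0=\mathcal{T},\mathcal{T}_1,\ldots,\mathcal{T}_r$ such that $f_i$ is admissible in $\mathcal{T}_{i-1}$ and performing it yields $\mathcal{T}_i$; then we write $\mathcal{T}\xrightarrow{F}\mathcal{T}_r$. Flips in a sequence are distinct objects even if they have the same underlying edge. For $1\le i<j\le r$, flip $f_j$ is adjacent to $f_i$ (written $f_i\to f_j$) if (1) either $\phi(f_i)=\epsilon(f_j)$ or $\phi(f_i)$ and $\epsilon(f_j)$ share a triangle in $\mathcal{T}_{j-1}$,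 and (2) there is no $p$ with $i<p<j$ and $\epsilon(f_p)=\phi(f_i)$. $\mathcal{D}_F$ is the directed acyclic graph whose nodes are the flips of $F$ and whose arcs are the pairs $f_i\to f_j$; a component of it is a weakly connected component. The flip distance between two triangulations is the minimum length of a valid sequence transforming one into the other. An instance $(\mathcal{T}_{initial},\mathcal{T}_{final},k)$ of Flip Distance consists of two triangulations of $\mathcal{P}$ and $k\in\mathbb{N}$; a solution is a valid sequence $F$ of length $k$ with $\mathcal{T}_{initial}\xrightarrow{F}\mathcal{T}_{final}$, where $k$ is the flip distance between them. For a solution $F=\langle f_1,\ldots,f_k\rangle$, $\mathcal{T}_j$ denotes the outcome of applying $\langle f_1,\ldots,f_j\rangle$ to $\mathcal{T}_{initial}$. A changed edge is an edge of $\mathcal{T}_{initial}$ not in $\mathcal{T}_{final}$; a component of $\mathcal{D}_F$ is essential if it contains a flip whose underlying edge is a changed edge. A solution $F$ is normalized if every component of $\mathcal{D}_F$ is essential and the flips of each component of $\mathcal{D}_F$ appear as a consecutive block in $F$. *)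

theory Defs
  imports "HOL-Analysis.Analysis"
begin

type_synonym pt = "real \<times> real"
type_synonym triang = "pt set set"   (* a triangulation = set of triangles, each a 3-set of points *)
type_synonym edge = "pt set"

definition triangulation :: "pt set \<Rightarrow> triang \<Rightarrow> bool" where
  "triangulation P T \<longleftrightarrow> finite P \<and>
     (\<forall>t\<in>T. t \<subseteq> P \<and> card t = 3 \<and> \<not> collinear t) \<and>
     \<Union>T = P \<and>
     \<Union>((\<lambda>t. convex hull t) ` T) = convex hull P \<and>
     (\<forall>t\<in>T. \<forall>s\<in>T. convex hull t \<inter> convex hull s = convex hull (t \<inter> s))"

definition edges :: "triang \<Rightarrow> edge set" where
  "edges T = {e. card e = 2 \<and> (\<exists>t\<in>T. e \<subseteq> t)}"

definition interior_edge :: "triang \<Rightarrow> edge \<Rightarrow> bool" where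
  "interior_edge T e \<longleftrightarrow> e \<in> edges T \<and> card {t\<in>T. e \<subseteq> t} = 2"

definition quad :: "triang \<Rightarrow> edge \<Rightarrow> pt set" where
  "quad T e = \<Union>{t\<in>T. e \<subseteq> t}"

definition convex_quad :: "pt set \<Rightarrow> bool" where
  "convex_quad Q \<longleftrightarrow> card Q = 4 \<and> (\<forall>p\<in>Q. p \<notin> convex hull (Q - {p}))"

definition admissible :: "triang \<Rightarrow> edge \<Rightarrow> bool" where
  "admissible T e \<longleftrightarrow> interior_edge T e \<and> convex_quad (quad T e)"

text \<open>the other diagonal of the quadrilateral, i.e. the new edge phi(f)\<close>
definition new_diag :: "triang \<Rightarrow> edge \<Rightarrow> edge" where
  "new_diag T e = quad T e - e"

definition do_flip :: "triang \<Rightarrow> edge \<Rightarrow> triang" where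
  "do_flip T e = {t\<in>T. \<not> e \<subseteq> t} \<union> {insert x (new_diag T e) | x. x \<in> e}"

text \<open>A flip sequence is represented by the list of underlying edges; the
 i-th list entry (0-based) is the flip f_(i+1) of the paper.\<close>
fun valid :: "triang \<Rightarrow> edge list \<Rightarrow> bool" where
  "valid T [] = True"
| "valid T (e # es) = (admissible T e \<and> valid (do_flip T e) es)"

fun apply_flips :: "triang \<Rightarrow> edge list \<Rightarrow> triang" where
  "apply_flips T [] = T"
| "apply_flips T (e # es) = apply_flips (do_flip T e) es"

text \<open>triangulation before the flip with 0-based index j (T_j in the paper's
 1-based indexing after j flips)\<close>
definition tri_at :: "triang \<Rightarrow> edge list \<Rightarrow> nat \<Rightarrow> triang" where
  "tri_at T F j = apply_flips T (take j F)"

definition phi :: "triang \<Rightarrow> edge list \<Rightarrow> nat \<Rightarrow> edge" where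
  "phi T F i = new_diag (tri_at T F i) (F ! i)"

definition share_triangle :: "triang \<Rightarrow> edge \<Rightarrow> edge \<Rightarrow> bool" where
  "share_triangle T e e' \<longleftrightarrow> e \<noteq> e' \<and> (\<exists>t\<in>T. e \<subseteq> t \<and> e' \<subseteq> t)"

text \<open>arcs of D_F, on 0-based flip indices\<close>
definition adj :: "triang \<Rightarrow> edge list \<Rightarrow> (nat \<times> nat) set" where
  "adj T F = {(i, j). i < j \<and> j < length F \<and>
      (phi T F i = F ! j \<or> share_triangle (tri_at T F j) (phi T F i) (F ! j)) \<and>
      \<not> (\<exists>p. i < p \<and> p < j \<and> F ! p = phi T F i)}"

definition component :: "triang \<Rightarrow> edge list \<Rightarrow> nat \<Rightarrow> nat set" where
  "component T F i = {j. j < length F \<and> (i, j) \<in> (adj T F \<union> (adj T F)\<inverse>)\<^sup>*}"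

definition components :: "triang \<Rightarrow> edge list \<Rightarrow> nat set set" where
  "components T F = {component T F i | i. i < length F}"

definition flip_distance :: "triang \<Rightarrow> triang \<Rightarrow> nat" where
  "flip_distance T T' = (LEAST k. \<exists>F. valid T F \<and> apply_flips T F = T' \<and> length F = k)"

definition is_solution :: "pt set \<Rightarrow> triang \<Rightarrow> triang \<Rightarrow> nat \<Rightarrow> edge list \<Rightarrow> bool" where
  "is_solution P Ti Tf k F \<longleftrightarrow> triangulation P Ti \<and> triangulation P Tf \<and>
     k = flip_distance Ti Tf \<and> length F = k \<and> valid Ti F \<and> apply_flips Ti F = Tf"

definition changed_edge :: "triang \<Rightarrow> triang \<Rightarrow> edge \<Rightarrow> bool" where
  "changed_edge Ti Tf e \<longleftrightarrow> e \<in> edges Ti \<and> e \<notin> edges Tf"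

definition essential :: "triang \<Rightarrow> triang \<Rightarrow> edge list \<Rightarrow> nat set \<Rightarrow> bool" where
  "essential Ti Tf F C \<longleftrightarrow> (\<exists>p\<in>C. changed_edge Ti Tf (F ! p))"

definition normalized :: "pt set \<Rightarrow> triang \<Rightarrow> triang \<Rightarrow> nat \<Rightarrow> edge list \<Rightarrow> bool" where
  "normalized P Ti Tf k F \<longleftrightarrow> is_solution P Ti Tf k F \<and>
     (\<forall>C\<in>components Ti F. essential Ti Tf F C \<and> (\<exists>a b. C = {a..<b}))"

end

(* Let flips a < h have the same edge {c, d} and suppose no directed path leads from a to h;
   let R be the set of flips reachable from a. A flip outside R cannot remove a triangle that
   carries the new diagonal of an R-flip still present, since it would be adjacent to that flip.
   Hence the triangles not created by R-flips since a stay inside the region covered at time a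
   by the triangles avoiding {c, d}, and the triangle at {c, d} removed by flip h is such a
   triangle. But it lies on the same side of cd as one of the two triangles at {c, d} at time a,
   so their interiors meet, although the triangles of every intermediate triangulation have
   pairwise disjoint interiors. *)

theory Submission
  imports Defs
begin

section \<open>Orientation and triangles in the plane\<close>

text \<open>The sign of \<open>det2 (d - c) (x - c)\<close> tells on which side of the line cd the point x lies.\<close>

definition det2 :: "pt \<Rightarrow> pt \<Rightarrow> real" where
  "det2 u v = fst u * snd v - snd u * fst v"

lemma det2_basis_decomp:
  assumes "det2 u w \<noteq> 0"
  shows "v = (det2 v w / det2 u w) *\<^sub>R u + (det2 u v / det2 u w) *\<^sub>R w"
proof -
  have "fst v * det2 u w = det2 v w * fst u + det2 u v * fst w"
    and "snd v * det2 u w = det2 v w * snd u + det2 u v * snd w"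
    unfolding det2_def by (simp_all add: algebra_simps)
  with assms show ?thesis
    unfolding prod_eq_iff by (simp add: field_simps)
qed

lemma det2_eq_0_imp_parallel:
  assumes "det2 u v = 0" "u \<noteq> 0"
  obtains k where "v = k *\<^sub>R u"
proof (cases "fst u = 0")
  case True
  with assms have "snd u \<noteq> 0" by (simp add: prod_eq_iff)
  with True assms(1) show ?thesis
    by (intro that[of "snd v / snd u"]) (auto simp: det2_def prod_eq_iff)
next
  case False
  with assms(1) show ?thesis
    by (intro that[of "fst v / fst u"]) (auto simp: det2_def prod_eq_iff field_simps)
qed

lemma collinear_iff_det2: "collinear {c, d, z} \<longleftrightarrow> det2 (d - c) (z - c) = 0"
proof -
  have "collinear {c, d, z} \<longleftrightarrow> collinear {0, d - c, z - c}"
    using collinear_3[of d c z] by (simp add: insert_commute)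
  also have "\<dots> \<longleftrightarrow> det2 (d - c) (z - c) = 0"
  proof
    assume "collinear {0, d - c, z - c}"
    then consider "d - c = 0" | "z - c = 0" | k where "z - c = k *\<^sub>R (d - c)"
      unfolding collinear_lemma by blast
    then show "det2 (d - c) (z - c) = 0"
      by cases (simp_all add: det2_def)
  next
    assume "det2 (d - c) (z - c) = 0"
    then show "collinear {0, d - c, z - c}"
      unfolding collinear_lemma by (metis det2_eq_0_imp_parallel)
  qed
  finally show ?thesis .
qed

lemma in_interior_triangleI:
  fixes a b c :: pt
  assumes "\<not> collinear {a, b, c}" "0 < x" "0 < y" "0 < z" "x + y + z = 1"
  shows "x *\<^sub>R a + y *\<^sub>R b + z *\<^sub>R c \<in> interior (convex hull {a, b, c})"
proof -
  have "interior (convex hull {a, b, c}) = {v. \<exists>x y z. 0 < x \<and> 0 < y \<and> 0 < z \<and> x + y + z = 1 \<and>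
      x *\<^sub>R a + y *\<^sub>R b + z *\<^sub>R c = v}"
    using interior_convex_hull_3_minimal[OF assms(1)] by simp
  with assms(2-) show ?thesis
    by blast
qed

lemma scaleR_affine_3:
  fixes a b c :: "'a::real_vector"
  assumes "x + y + z = 1"
  shows "x *\<^sub>R a + y *\<^sub>R b + z *\<^sub>R c = a + y *\<^sub>R (b - a) + z *\<^sub>R (c - a)"
proof -
  have "x *\<^sub>R a + y *\<^sub>R b + z *\<^sub>R c = (x + y + z) *\<^sub>R a + y *\<^sub>R (b - a) + z *\<^sub>R (c - a)"
    by (simp add: algebra_simps)
  with assms show ?thesis
    by simp
qed

lemma open_meets_triangle_imp_meets_interior:
  fixes t :: "pt set"
  assumes "card t = 3" "\<not> collinear t" "open U" "U \<inter> convex hull t \<noteq> {}"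
  shows "U \<inter> interior (convex hull t) \<noteq> {}"
proof -
  obtain a b c where t: "t = {a, b, c}" using assms(1) by (auto simp: card_3_iff)
  have "\<not> collinear {a, b, c}"
    using assms(2) t by simp
  then have "(1/3) *\<^sub>R a + (1/3) *\<^sub>R b + (1/3) *\<^sub>R c \<in> interior (convex hull t)"
    unfolding t by (rule in_interior_triangleI) simp_all
  then have "closure (interior (convex hull t)) = convex hull t"
    using convex_closure_interior[of "convex hull t"] t by (auto simp: compact_convex_hull)
  with assms(3,4) show ?thesis
    by (metis open_Int_closure_eq_empty)
qed

lemma same_side_triangles_interiors_meet:
  assumes "0 < det2 (d - c) (a - c) * det2 (d - c) (z - c)"
  shows "interior (convex hull {c, d, a}) \<inter> interior (convex hull {c, d, z}) \<noteq> {}"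
proof -
  define u w where "u = d - c" and "w = z - c"
  have Da: "det2 u (a - c) \<noteq> 0" and Dw: "det2 u w \<noteq> 0"
    using assms unfolding u_def w_def by auto
  define \<beta> \<gamma> where "\<beta> = det2 (a - c) w / det2 u w" and "\<gamma> = det2 u (a - c) / det2 u w"
  have a: "a - c = \<beta> *\<^sub>R u + \<gamma> *\<^sub>R w"
    unfolding \<beta>_def \<gamma>_def using det2_basis_decomp[OF Dw] .
  have \<gamma>: "0 < \<gamma>"
    using assms unfolding \<gamma>_def u_def w_def by (simp add: zero_less_mult_iff zero_less_divide_iff)
  \<comment> \<open>Walk from the midpoint of cd a short distance towards a.\<close>
  define K where "K = 1 + \<bar>\<beta>\<bar> + \<bar>\<beta> + \<gamma>\<bar>"
  have K: "0 < K" "1 + 2 * \<bar>\<beta>\<bar> < 2 * K" "2 * \<bar>\<beta> + \<gamma>\<bar> < 2 * K"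
    unfolding K_def by (simp_all add: add_pos_nonneg)
  define t where "t = 1 / (2 * K)"
  define B G where "B = t * \<bar>\<beta>\<bar>" and "G = t * \<bar>\<beta> + \<gamma>\<bar>"
  have t: "0 < t" "t + 2 * B < 1" "2 * G < 1"
    unfolding t_def B_def G_def using K by (simp_all add: field_simps)
  have "0 \<le> B" "- B \<le> t * \<beta>" "t * (\<beta> + \<gamma>) \<le> G"
    unfolding B_def G_def using t(1) abs_ge_minus_self[of "t * \<beta>"] abs_ge_self[of "t * (\<beta> + \<gamma>)"]
    by (simp_all add: abs_mult)
  then have pos: "0 < (1 - t) / 2" "0 < (1 - t) / 2 + t * \<beta>" "0 < (1 + t) / 2 - t * (\<beta> + \<gamma>)"
    using t by (simp_all add: field_simps)
  have sums: "(1 - t) / 2 + (1 - t) / 2 + t = 1"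
    "(1 + t) / 2 - t * (\<beta> + \<gamma>) + ((1 - t) / 2 + t * \<beta>) + t * \<gamma> = 1"
    by (simp_all add: field_simps)
  have "\<not> collinear {c, d, a}" "\<not> collinear {c, d, z}"
    using Da Dw unfolding u_def w_def by (simp_all add: collinear_iff_det2)
  define y where "y = c + ((1 - t) / 2) *\<^sub>R u + t *\<^sub>R (a - c)"
  have "y = ((1 - t) / 2) *\<^sub>R c + ((1 - t) / 2) *\<^sub>R d + t *\<^sub>R a"
    unfolding y_def u_def scaleR_affine_3[OF sums(1)] ..
  also have "\<dots> \<in> interior (convex hull {c, d, a})"
    using in_interior_triangleI[OF \<open>\<not> collinear {c, d, a}\<close> pos(1) pos(1) t(1) sums(1)] .
  finally have "y \<in> interior (convex hull {c, d, a})" .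
  have "y = c + ((1 - t) / 2 + t * \<beta>) *\<^sub>R u + (t * \<gamma>) *\<^sub>R w"
    unfolding y_def a by (simp add: algebra_simps)
  also have "\<dots> = ((1 + t) / 2 - t * (\<beta> + \<gamma>)) *\<^sub>R c + ((1 - t) / 2 + t * \<beta>) *\<^sub>R d
      + (t * \<gamma>) *\<^sub>R z"
    unfolding scaleR_affine_3[OF sums(2)] u_def w_def ..
  also have "\<dots> \<in> interior (convex hull {c, d, z})"
    using in_interior_triangleI[OF \<open>\<not> collinear {c, d, z}\<close> pos(3) pos(2)
        mult_pos_pos[OF t(1) \<gamma>] sums(2)] .
  finally show ?thesis
    using \<open>y \<in> interior (convex hull {c, d, a})\<close> by blast
qed

lemma opposite_side_triangles_interiors_disjoint:
  assumes "det2 (b - a) (c - a) * det2 (b - a) (d - a) < 0"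
  shows "interior (convex hull {a, b, c}) \<inter> interior (convex hull {a, b, d}) = {}"
proof -
  define w where "w = (- snd (b - a), fst (b - a))"
  have side: "det2 (b - a) (x - a) = w \<bullet> x - w \<bullet> a" for x
    unfolding w_def det2_def by (simp add: inner_prod_def algebra_simps)
  have "w \<noteq> 0"
    using assms side[of c] by auto
  have wb: "w \<bullet> b = w \<bullet> a"
    using side[of b] by (simp add: det2_def)
  have ge: "convex hull {a, b, x} \<subseteq> {y. w \<bullet> a \<le> w \<bullet> y}" if "0 \<le> det2 (b - a) (x - a)" for x
    by (rule hull_minimal) (use that side[of x] wb in \<open>auto simp: convex_halfspace_ge\<close>)
  have le: "convex hull {a, b, x} \<subseteq> {y. w \<bullet> y \<le> w \<bullet> a}" if "det2 (b - a) (x - a) \<le> 0" for x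
    by (rule hull_minimal) (use that side[of x] wb in \<open>auto simp: convex_halfspace_le\<close>)
  have "(0 \<le> det2 (b - a) (c - a) \<and> det2 (b - a) (d - a) \<le> 0) \<or>
      (det2 (b - a) (c - a) \<le> 0 \<and> 0 \<le> det2 (b - a) (d - a))"
    using assms by (auto simp: mult_less_0_iff)
  then have "convex hull {a, b, c} \<inter> convex hull {a, b, d} \<subseteq> {y. w \<bullet> y = w \<bullet> a}"
    using ge le by fastforce
  then have "interior (convex hull {a, b, c} \<inter> convex hull {a, b, d}) = {}"
    using interior_mono interior_hyperplane[OF \<open>w \<noteq> 0\<close>] by blast
  then show ?thesis by simp
qed

lemma point_on_line_in_closed_segment:
  fixes x v :: "'a::real_vector"
  assumes "r \<le> s" "s \<le> t"
  shows "x + s *\<^sub>R v \<in> closed_segment (x + r *\<^sub>R v) (x + t *\<^sub>R v)"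
proof (cases "r = t")
  case False
  define u where "u = (s - r) / (t - r)"
  have "0 \<le> u" "u \<le> 1" "r + u * (t - r) = s"
    using assms False unfolding u_def by (auto simp: field_simps)
  moreover have "(1 - u) *\<^sub>R (x + r *\<^sub>R v) + u *\<^sub>R (x + t *\<^sub>R v) = x + (r + u * (t - r)) *\<^sub>R v"
    by (simp add: algebra_simps)
  ultimately show ?thesis
    unfolding in_segment by metis
qed (use assms in auto)

lemma segment_crosses_line:
  assumes "det2 (d - c) (a - c) * det2 (d - c) (b - c) < 0"
  obtains s \<mu> where "0 < s" "s < 1" "(1 - s) *\<^sub>R a + s *\<^sub>R b = c + \<mu> *\<^sub>R (d - c)"
proof -
  define ga gb where "ga = det2 (d - c) (a - c)" and "gb = det2 (d - c) (b - c)"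
  have "(0 < ga \<and> gb < 0) \<or> (ga < 0 \<and> 0 < gb)"
    using assms unfolding ga_def gb_def by (auto simp: mult_less_0_iff)
  define s where "s = ga / (ga - gb)"
  have s: "0 < s" "s < 1" "(1 - s) * ga + s * gb = 0"
    using \<open>(0 < ga \<and> gb < 0) \<or> (ga < 0 \<and> 0 < gb)\<close> unfolding s_def by (auto simp: field_simps)
  have "det2 (d - c) ((1 - s) *\<^sub>R a + s *\<^sub>R b - c) = (1 - s) * ga + s * gb"
    unfolding ga_def gb_def det2_def by (simp add: algebra_simps)
  moreover have "d - c \<noteq> 0"
    using assms by (auto simp: det2_def)
  ultimately obtain \<mu> where "(1 - s) *\<^sub>R a + s *\<^sub>R b - c = \<mu> *\<^sub>R (d - c)"
    using s(3) det2_eq_0_imp_parallel by metis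
  then show ?thesis
    using that[of s \<mu>] s(1,2) by (simp add: algebra_simps)
qed

text \<open>The hypotheses say that acbd is a convex quadrilateral with diagonals ab and cd.\<close>

lemma convex_quadrilateral_diagonals_meet:
  assumes opp: "det2 (d - c) (a - c) * det2 (d - c) (b - c) < 0"
    and nc: "c \<notin> convex hull {d, a, b}" and nd: "d \<notin> convex hull {c, a, b}"
  obtains s \<mu> where "0 < s" "s < 1" "0 < \<mu>" "\<mu> < 1"
    "(1 - s) *\<^sub>R a + s *\<^sub>R b = (1 - \<mu>) *\<^sub>R c + \<mu> *\<^sub>R d"
proof -
  obtain s \<mu> where s: "0 < s" "s < 1" and meet: "(1 - s) *\<^sub>R a + s *\<^sub>R b = c + \<mu> *\<^sub>R (d - c)"
    using segment_crosses_line[OF opp] .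
  define p where "p = (1 - s) *\<^sub>R a + s *\<^sub>R b"
  have "p \<in> closed_segment a b"
    unfolding p_def in_segment using s by (intro exI[of _ s]) auto
  then have pab: "p \<in> convex hull {x, a, b}" for x
    using hull_mono[of "{a, b}" "{x, a, b}" convex] by (auto simp: segment_convex_hull)
  have p: "p = c + \<mu> *\<^sub>R (d - c)"
    unfolding p_def meet ..
  have "0 < \<mu>"
  proof (rule ccontr)
    assume "\<not> 0 < \<mu>"
    then have "c + 0 *\<^sub>R (d - c) \<in> closed_segment p (c + 1 *\<^sub>R (d - c))"
      unfolding p by (intro point_on_line_in_closed_segment) auto
    then have "c \<in> closed_segment p d" by simp
    moreover have "closed_segment p d \<subseteq> convex hull {d, a, b}"
      by (rule closed_segment_subset_convex_hull[OF pab]) (simp add: hull_inc)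
    ultimately show False
      using nc by blast
  qed
  moreover have "\<mu> < 1"
  proof (rule ccontr)
    assume "\<not> \<mu> < 1"
    then have "c + 1 *\<^sub>R (d - c) \<in> closed_segment (c + 0 *\<^sub>R (d - c)) p"
      unfolding p by (intro point_on_line_in_closed_segment) auto
    then have "d \<in> closed_segment c p" by simp
    moreover have "closed_segment c p \<subseteq> convex hull {c, a, b}"
      by (rule closed_segment_subset_convex_hull[OF _ pab]) (simp add: hull_inc)
    ultimately show False
      using nd by blast
  qed
  moreover have "c + \<mu> *\<^sub>R (d - c) = (1 - \<mu>) *\<^sub>R c + \<mu> *\<^sub>R d"
    by (simp add: algebra_simps)
  ultimately show ?thesis
    using s that[of s \<mu>] meet by auto
qed

lemma convex_quadrilateral_flip_opposite:
  assumes opp: "det2 (d - c) (a - c) * det2 (d - c) (b - c) < 0"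
    and "c \<notin> convex hull {d, a, b}" "d \<notin> convex hull {c, a, b}"
  shows "det2 (b - a) (c - a) * det2 (b - a) (d - a) < 0"
proof -
  obtain s \<mu> where s: "0 < s" "s < 1" and \<mu>: "0 < \<mu>" "\<mu> < 1"
    and meet: "(1 - s) *\<^sub>R a + s *\<^sub>R b = (1 - \<mu>) *\<^sub>R c + \<mu> *\<^sub>R d"
    using convex_quadrilateral_diagonals_meet[OF assms] .
  define K where "K = det2 (b - a) (d - c)"
  have "K = det2 (d - c) (a - c) - det2 (d - c) (b - c)"
    unfolding K_def det2_def by (simp add: algebra_simps)
  then have "K \<noteq> 0"
    using opp by auto
  have "c - a = ((1 - \<mu>) *\<^sub>R c + \<mu> *\<^sub>R d) - a - \<mu> *\<^sub>R (d - c)"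
    by (simp add: algebra_simps)
  also have "\<dots> = s *\<^sub>R (b - a) - \<mu> *\<^sub>R (d - c)"
    unfolding meet[symmetric] by (simp add: algebra_simps)
  finally have ca: "c - a = s *\<^sub>R (b - a) - \<mu> *\<^sub>R (d - c)" .
  have "d - a = ((1 - \<mu>) *\<^sub>R c + \<mu> *\<^sub>R d) - a + (1 - \<mu>) *\<^sub>R (d - c)"
    by (simp add: algebra_simps)
  also have "\<dots> = s *\<^sub>R (b - a) + (1 - \<mu>) *\<^sub>R (d - c)"
    unfolding meet[symmetric] by (simp add: algebra_simps)
  finally have da: "d - a = s *\<^sub>R (b - a) + (1 - \<mu>) *\<^sub>R (d - c)" .
  have "det2 (b - a) (c - a) = - \<mu> * K" "det2 (b - a) (d - a) = (1 - \<mu>) * K"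
    unfolding ca da K_def det2_def by (simp_all add: algebra_simps)
  then have "det2 (b - a) (c - a) * det2 (b - a) (d - a) = - (\<mu> * (1 - \<mu>) * (K * K))"
    by simp
  moreover have "0 < K * K"
    using \<open>K \<noteq> 0\<close> not_real_square_gt_zero by blast
  then have "0 < \<mu> * (1 - \<mu>) * (K * K)"
    using \<mu> by simp
  ultimately show ?thesis
    by linarith
qed

lemma convex_hull_3_split:
  fixes a b p x :: "'a::euclidean_space"
  assumes p: "p \<in> closed_segment a b"
  shows "convex hull {a, b, x} \<subseteq> convex hull {p, x, a} \<union> convex hull {p, x, b}"
proof
  fix y assume "y \<in> convex hull {a, b, x}"
  have pab: "p \<in> convex hull {a, b}"
    using p by (simp add: segment_convex_hull)
  then have "p \<in> convex hull {a, b, x}"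
    using hull_mono[of "{a, b}" "{a, b, x}"] by blast
  then obtain v where v: "v \<in> {a, b, x}" and y: "y \<in> convex hull (insert p ({a, b, x} - {v}))"
    using \<open>y \<in> convex hull {a, b, x}\<close> by (rule in_convex_hull_exchange)
  have "insert p ({a, b, x} - {v}) \<subseteq> {p, x, b} \<or> insert p ({a, b, x} - {v}) \<subseteq> {p, x, a} \<or>
      insert p ({a, b, x} - {v}) \<subseteq> {p, a, b}"
    using v by auto
  then consider "y \<in> convex hull {p, x, b}" | "y \<in> convex hull {p, x, a}" | "y \<in> convex hull {p, a, b}"
    using y by (elim disjE; blast dest: hull_mono)
  then show "y \<in> convex hull {p, x, a} \<union> convex hull {p, x, b}"
  proof cases
    case 3
    then have "y \<in> closed_segment a p \<union> closed_segment p b"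
      using pab hull_redundant[OF pab] Un_closed_segment[of p a b]
      by (simp add: segment_convex_hull)
    moreover have "closed_segment a p \<subseteq> convex hull {p, x, a}"
      "closed_segment p b \<subseteq> convex hull {p, x, b}"
      by (rule closed_segment_subset_convex_hull; simp add: hull_inc)+
    ultimately show ?thesis by blast
  qed blast+
qed

lemma convex_quadrilateral_flip_covered:
  assumes "det2 (d - c) (a - c) * det2 (d - c) (b - c) < 0"
    and "c \<notin> convex hull {d, a, b}" "d \<notin> convex hull {c, a, b}"
    and x: "x \<in> {c, d}"
  shows "convex hull {a, b, x} \<subseteq> convex hull {c, d, a} \<union> convex hull {c, d, b}"
proof -
  obtain s \<mu> where s: "0 < s" "s < 1" and \<mu>: "0 < \<mu>" "\<mu> < 1"
    and meet: "(1 - s) *\<^sub>R a + s *\<^sub>R b = (1 - \<mu>) *\<^sub>R c + \<mu> *\<^sub>R d"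
    using convex_quadrilateral_diagonals_meet[OF assms(1-3)] .
  define p where "p = (1 - s) *\<^sub>R a + s *\<^sub>R b"
  have "p \<in> closed_segment a b"
    unfolding p_def in_segment using s by (intro exI[of _ s]) auto
  have "p \<in> closed_segment c d"
    unfolding p_def meet in_segment using \<mu> by (intro exI[of _ \<mu>]) auto
  then have pcd: "p \<in> convex hull {c, d, y}" for y
    using hull_mono[of "{c, d}" "{c, d, y}" convex] by (auto simp: segment_convex_hull)
  have "convex hull {p, x, a} \<subseteq> convex hull {c, d, a}" "convex hull {p, x, b} \<subseteq> convex hull {c, d, b}"
    using pcd x by (intro hull_minimal; auto intro: hull_inc simp: convex_convex_hull)+
  then show ?thesis
    using convex_hull_3_split[OF \<open>p \<in> closed_segment a b\<close>, of x] by blast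
qed

section \<open>Flips preserve interior-disjointness\<close>

definition interior_disjoint_triangles :: "triang \<Rightarrow> bool" where
  "interior_disjoint_triangles T \<longleftrightarrow> (\<forall>t\<in>T. card t = 3 \<and> \<not> collinear t) \<and>
     (\<forall>t\<in>T. \<forall>s\<in>T. t \<noteq> s \<longrightarrow> interior (convex hull t) \<inter> interior (convex hull s) = {})"

lemma interior_disjoint_trianglesD:
  assumes "interior_disjoint_triangles T" "t \<in> T"
  shows "card t = 3" "\<not> collinear t"
    and "s \<in> T \<Longrightarrow> t \<noteq> s \<Longrightarrow> interior (convex hull t) \<inter> interior (convex hull s) = {}"
  using assms unfolding interior_disjoint_triangles_def by auto

lemma triangulation_imp_interior_disjoint_triangles:
  assumes "triangulation P T"
  shows "interior_disjoint_triangles T"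
  unfolding interior_disjoint_triangles_def
proof (intro conjI ballI impI)
  fix t assume "t \<in> T"
  then show "card t = 3" "\<not> collinear t"
    using assms unfolding triangulation_def by auto
next
  fix t s assume "t \<in> T" "s \<in> T" "t \<noteq> s"
  then have hulls: "convex hull t \<inter> convex hull s = convex hull (t \<inter> s)"
    and card: "card t = 3" "card s = 3"
    using assms unfolding triangulation_def by auto
  have fin: "finite t" "finite s"
    using card by (auto intro: card_ge_0_finite)
  have "\<not> t \<subseteq> s"
    using card_subset_eq[OF fin(2)] card \<open>t \<noteq> s\<close> by auto
  then have "t \<inter> s \<subset> t"
    by blast
  then have "card (t \<inter> s) < 3" "finite (t \<inter> s)"
    using fin card psubset_card_mono[OF fin(1)] by auto
  then have "interior (convex hull (t \<inter> s)) = {}"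
    by (intro empty_interior_convex_hull) auto
  then show "interior (convex hull t) \<inter> interior (convex hull s) = {}"
    using hulls by (metis interior_Int)
qed

lemma triangle_through_edge:
  fixes t :: "pt set"
  assumes "card t = 3" "\<not> collinear t" "c \<in> t" "d \<in> t" "c \<noteq> d"
  obtains z where "t = {c, d, z}" "det2 (d - c) (z - c) \<noteq> 0"
proof -
  have "card (t - {c, d}) = 1"
    using assms by (simp add: card_Diff_subset card_ge_0_finite)
  then obtain z where "t - {c, d} = {z}"
    by (rule card_1_singletonE)
  then have "t = {c, d, z}"
    using assms(3,4) by blast
  with assms(2) show ?thesis
    using that collinear_iff_det2 by blast
qed

definition flip_new_triangles :: "triang \<Rightarrow> edge \<Rightarrow> triang" where
  "flip_new_triangles T e = {insert x (new_diag T e) | x. x \<in> e}"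

lemma do_flip_eq: "do_flip T e = {t \<in> T. \<not> e \<subseteq> t} \<union> flip_new_triangles T e"
  unfolding do_flip_def flip_new_triangles_def ..

lemma interior_disjoint_triangles_opposite_sides:
  assumes "interior_disjoint_triangles T" "{c, d, a} \<in> T" "{c, d, b} \<in> T" "{c, d, a} \<noteq> {c, d, b}"
    and "det2 (d - c) (a - c) \<noteq> 0" "det2 (d - c) (b - c) \<noteq> 0"
  shows "det2 (d - c) (a - c) * det2 (d - c) (b - c) < 0"
proof (rule ccontr)
  assume "\<not> ?thesis"
  with assms(5,6) have "0 < det2 (d - c) (a - c) * det2 (d - c) (b - c)"
    by (simp add: not_less less_le)
  then have "interior (convex hull {c, d, a}) \<inter> interior (convex hull {c, d, b}) \<noteq> {}"
    by (rule same_side_triangles_interiors_meet)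
  then show False
    using interior_disjoint_trianglesD(3)[OF assms(1-4)] by simp
qed

lemma admissible_flip_shape:
  assumes T: "interior_disjoint_triangles T" and adm: "admissible T e"
  obtains c d a b where "e = {c, d}" "c \<noteq> d" "{t \<in> T. e \<subseteq> t} = {{c, d, a}, {c, d, b}}"
    "det2 (d - c) (a - c) * det2 (d - c) (b - c) < 0"
    "c \<notin> convex hull {d, a, b}" "d \<notin> convex hull {c, a, b}"
    "flip_new_triangles T e = {{a, b, c}, {a, b, d}}"
proof -
  have "card e = 2" "card {t \<in> T. e \<subseteq> t} = 2" and cq: "convex_quad (quad T e)"
    using adm unfolding admissible_def interior_edge_def edges_def by auto
  obtain c d where e: "e = {c, d}" "c \<noteq> d"
    using \<open>card e = 2\<close> by (auto simp: card_2_iff)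
  obtain t1 t2 where tt: "{t \<in> T. e \<subseteq> t} = {t1, t2}" "t1 \<noteq> t2"
    using \<open>card {t \<in> T. e \<subseteq> t} = 2\<close> by (auto simp: card_2_iff)
  have "t1 \<in> T" "t2 \<in> T" "c \<in> t1" "d \<in> t1" "c \<in> t2" "d \<in> t2"
    using tt e by blast+
  obtain a where t1: "t1 = {c, d, a}" and Da: "det2 (d - c) (a - c) \<noteq> 0"
    using triangle_through_edge[OF interior_disjoint_trianglesD(1,2)[OF T \<open>t1 \<in> T\<close>]
        \<open>c \<in> t1\<close> \<open>d \<in> t1\<close> \<open>c \<noteq> d\<close>] by blast
  obtain b where t2: "t2 = {c, d, b}" and Db: "det2 (d - c) (b - c) \<noteq> 0"
    using triangle_through_edge[OF interior_disjoint_trianglesD(1,2)[OF T \<open>t2 \<in> T\<close>]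
        \<open>c \<in> t2\<close> \<open>d \<in> t2\<close> \<open>c \<noteq> d\<close>] by blast
  have opp: "det2 (d - c) (a - c) * det2 (d - c) (b - c) < 0"
    using interior_disjoint_triangles_opposite_sides[OF T] \<open>t1 \<in> T\<close> \<open>t2 \<in> T\<close> tt(2) Da Db
    unfolding t1 t2 by blast
  have "a \<notin> {c, d}" "b \<notin> {c, d}"
    using Da Db by (auto simp: det2_def algebra_simps)
  have q: "quad T e = {c, d, a, b}"
    unfolding quad_def tt t1 t2 by auto
  have nd: "new_diag T e = {a, b}"
    unfolding new_diag_def q unfolding e using \<open>a \<notin> {c, d}\<close> \<open>b \<notin> {c, d}\<close> by auto
  have "{c, d, a, b} - {c} = {d, a, b}" "{c, d, a, b} - {d} = {c, a, b}"
    using \<open>a \<notin> {c, d}\<close> \<open>b \<notin> {c, d}\<close> \<open>c \<noteq> d\<close> by auto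
  moreover have "c \<notin> convex hull ({c, d, a, b} - {c})" "d \<notin> convex hull ({c, d, a, b} - {d})"
    using cq unfolding convex_quad_def q by blast+
  ultimately have "c \<notin> convex hull {d, a, b}" "d \<notin> convex hull {c, a, b}"
    by simp_all
  moreover have "flip_new_triangles T e = {{a, b, c}, {a, b, d}}"
  proof -
    have "flip_new_triangles T e = {insert c {a, b}, insert d {a, b}}"
      unfolding flip_new_triangles_def nd unfolding e by blast
    moreover have "insert c {a, b} = {a, b, c}" "insert d {a, b} = {a, b, d}"
      by auto
    ultimately show ?thesis
      by simp
  qed
  ultimately show ?thesis
    using that[OF e tt(1)[unfolded t1 t2] opp] by blast
qed

lemma flip_new_triangles_covered:
  assumes "interior_disjoint_triangles T" "admissible T e" "t \<in> flip_new_triangles T e"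
  shows "convex hull t \<subseteq> (\<Union>s \<in> {s \<in> T. e \<subseteq> s}. convex hull s)"
proof -
  obtain c d a b where "e = {c, d}" "c \<noteq> d" and tt: "{t \<in> T. e \<subseteq> t} = {{c, d, a}, {c, d, b}}"
    and quad: "det2 (d - c) (a - c) * det2 (d - c) (b - c) < 0"
      "c \<notin> convex hull {d, a, b}" "d \<notin> convex hull {c, a, b}"
    and new: "flip_new_triangles T e = {{a, b, c}, {a, b, d}}"
    by (rule admissible_flip_shape[OF assms(1,2)])
  from assms(3) have "t = {a, b, c} \<or> t = {a, b, d}"
    unfolding new by simp
  then have "convex hull t \<subseteq> convex hull {c, d, a} \<union> convex hull {c, d, b}"
    using convex_quadrilateral_flip_covered[OF quad, of c] convex_quadrilateral_flip_covered[OF quad, of d]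
    by auto
  then show ?thesis
    unfolding tt by simp
qed

lemma noncollinear_3_card:
  assumes "\<not> collinear {a, b, c}"
  shows "card {a, b, c} = 3"
proof -
  have "a \<noteq> b"
  proof
    assume "a = b"
    then have "{a, b, c} = {a, c}"
      by simp
    with assms show False
      by simp
  qed
  moreover have "a \<noteq> c"
  proof
    assume "a = c"
    then have "{a, b, c} = {a, b}"
      by auto
    with assms show False
      by simp
  qed
  moreover have "b \<noteq> c"
  proof
    assume "b = c"
    then have "{a, b, c} = {a, b}"
      by simp
    with assms show False
      by simp
  qed
  ultimately show ?thesis
    by simp
qed

lemma interior_disjoint_triangles_Un:
  assumes A: "interior_disjoint_triangles A" and B: "interior_disjoint_triangles B"
    and AB: "\<And>t s. t \<in> A \<Longrightarrow> s \<in> B \<Longrightarrow> interior (convex hull t) \<inter> interior (convex hull s) = {}"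
  shows "interior_disjoint_triangles (A \<union> B)"
  unfolding interior_disjoint_triangles_def
proof (intro conjI ballI impI)
  fix t assume "t \<in> A \<union> B"
  then show "card t = 3" "\<not> collinear t"
    using interior_disjoint_trianglesD(1,2)[OF A] interior_disjoint_trianglesD(1,2)[OF B] by blast+
next
  fix t s assume "t \<in> A \<union> B" "s \<in> A \<union> B" "t \<noteq> s"
  then consider "t \<in> A" "s \<in> A" | "t \<in> A" "s \<in> B" | "t \<in> B" "s \<in> A" | "t \<in> B" "s \<in> B"
    by blast
  then show "interior (convex hull t) \<inter> interior (convex hull s) = {}"
  proof cases
    case 1
    then show ?thesis using interior_disjoint_trianglesD(3)[OF A] \<open>t \<noteq> s\<close> by blast
  next
    case 2
    then show ?thesis using AB by blast
  next
    case 3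
    then show ?thesis using AB[of s t] by (simp add: Int_commute)
  next
    case 4
    then show ?thesis using interior_disjoint_trianglesD(3)[OF B] \<open>t \<noteq> s\<close> by blast
  qed
qed

lemma interior_disjoint_triangles_flip_new:
  assumes "interior_disjoint_triangles T" "admissible T e"
  shows "interior_disjoint_triangles (flip_new_triangles T e)"
proof -
  obtain c d a b where "e = {c, d}" "c \<noteq> d" "{t \<in> T. e \<subseteq> t} = {{c, d, a}, {c, d, b}}"
    and quad: "det2 (d - c) (a - c) * det2 (d - c) (b - c) < 0"
      "c \<notin> convex hull {d, a, b}" "d \<notin> convex hull {c, a, b}"
    and new: "flip_new_triangles T e = {{a, b, c}, {a, b, d}}"
    by (rule admissible_flip_shape[OF assms])
  have opp: "det2 (b - a) (c - a) * det2 (b - a) (d - a) < 0"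
    by (rule convex_quadrilateral_flip_opposite[OF quad])
  then have "\<not> collinear {a, b, c}" "\<not> collinear {a, b, d}"
    by (auto simp: collinear_iff_det2)
  then show ?thesis
    unfolding interior_disjoint_triangles_def new
  proof (intro conjI ballI impI)
    fix t assume "t \<in> {{a, b, c}, {a, b, d}}"
    then show "card t = 3" "\<not> collinear t"
      using \<open>\<not> collinear {a, b, c}\<close> \<open>\<not> collinear {a, b, d}\<close> noncollinear_3_card by auto
  next
    fix t s assume "t \<in> {{a, b, c}, {a, b, d}}" "s \<in> {{a, b, c}, {a, b, d}}" "t \<noteq> s"
    then have "(t = {a, b, c} \<and> s = {a, b, d}) \<or> (t = {a, b, d} \<and> s = {a, b, c})"
      by blast
    then show "interior (convex hull t) \<inter> interior (convex hull s) = {}"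
      using opposite_side_triangles_interiors_disjoint[OF opp]
      by (elim disjE conjE) (simp_all add: Int_commute)
  qed
qed

lemma flip_old_new_interiors_disjoint:
  assumes T: "interior_disjoint_triangles T" and adm: "admissible T e"
    and r: "r \<in> T" "\<not> e \<subseteq> r" and n: "n \<in> flip_new_triangles T e"
  shows "interior (convex hull r) \<inter> interior (convex hull n) = {}"
proof (rule ccontr)
  assume "interior (convex hull r) \<inter> interior (convex hull n) \<noteq> {}"
  then obtain x where x: "x \<in> interior (convex hull r)" "x \<in> convex hull n"
    using interior_subset by blast
  then obtain s where s: "s \<in> T" "e \<subseteq> s" "x \<in> convex hull s"
    using flip_new_triangles_covered[OF T adm n] by blast
  have "interior (convex hull r) \<inter> interior (convex hull s) \<noteq> {}"
    using open_meets_triangle_imp_meets_interior[of s "interior (convex hull r)"]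
      interior_disjoint_trianglesD(1,2)[OF T s(1)] open_interior s(3) x(1) by blast
  moreover have "r \<noteq> s"
    using r s by blast
  ultimately show False
    using interior_disjoint_trianglesD(3)[OF T] r s(1) by blast
qed

lemma interior_disjoint_triangles_do_flip:
  assumes T: "interior_disjoint_triangles T" and adm: "admissible T e"
  shows "interior_disjoint_triangles (do_flip T e)"
  unfolding do_flip_eq
proof (rule interior_disjoint_triangles_Un)
  show "interior_disjoint_triangles {t \<in> T. \<not> e \<subseteq> t}"
    using T unfolding interior_disjoint_triangles_def by blast
  show "interior_disjoint_triangles (flip_new_triangles T e)"
    by (rule interior_disjoint_triangles_flip_new[OF T adm])
qed (use flip_old_new_interiors_disjoint[OF T adm] in blast)

lemma apply_flips_append: "apply_flips T (xs @ ys) = apply_flips (apply_flips T xs) ys"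
  by (induction xs arbitrary: T) auto

lemma valid_append: "valid T (xs @ ys) \<longleftrightarrow> valid T xs \<and> valid (apply_flips T xs) ys"
  by (induction xs arbitrary: T) auto

lemma tri_at_Suc: "j < length F \<Longrightarrow> tri_at T F (Suc j) = do_flip (tri_at T F j) (F ! j)"
  unfolding tri_at_def by (simp add: take_Suc_conv_app_nth apply_flips_append)

lemma admissible_tri_at:
  assumes "valid T F" "j < length F"
  shows "admissible (tri_at T F j) (F ! j)"
proof -
  have "valid T (take j F @ F ! j # drop (Suc j) F)"
    using assms by (simp flip: id_take_nth_drop)
  then show ?thesis
    unfolding valid_append tri_at_def by simp
qed

lemma interior_disjoint_triangles_tri_at:
  assumes "interior_disjoint_triangles T" "valid T F"
  shows "j \<le> length F \<Longrightarrow> interior_disjoint_triangles (tri_at T F j)"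
proof (induction j)
  case 0
  then show ?case using assms(1) by (simp add: tri_at_def)
next
  case (Suc j)
  then show ?case
    using interior_disjoint_triangles_do_flip admissible_tri_at[OF assms(2)] by (simp add: tri_at_Suc)
qed

section \<open>Equal flips are joined by a path\<close>

text \<open>For a flip a of a set R of flips, \<open>untouched T F R a n\<close> consists of the triangles of
  T_(a+n+1) not created by a flip of R with index between a and a + n.\<close>

fun untouched :: "triang \<Rightarrow> edge list \<Rightarrow> nat set \<Rightarrow> nat \<Rightarrow> nat \<Rightarrow> triang" where
  "untouched T F R a 0 = {t \<in> tri_at T F a. \<not> F ! a \<subseteq> t}"
| "untouched T F R a (Suc n) = {t \<in> untouched T F R a n. \<not> F ! Suc (a + n) \<subseteq> t} \<union>
    (if Suc (a + n) \<in> R then {}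
     else flip_new_triangles (tri_at T F (Suc (a + n))) (F ! Suc (a + n)))"

definition marked :: "triang \<Rightarrow> edge list \<Rightarrow> nat set \<Rightarrow> nat \<Rightarrow> triang \<Rightarrow> bool" where
  "marked T F R j U \<longleftrightarrow> (\<forall>r \<in> tri_at T F j - U. \<exists>c\<in>R. c < j \<and> phi T F c \<subseteq> r \<and>
     (\<forall>p. c < p \<and> p < j \<longrightarrow> F ! p \<noteq> phi T F c))"

lemma phi_subset_flip_new_triangles:
  "r \<in> flip_new_triangles (tri_at T F c) (F ! c) \<Longrightarrow> phi T F c \<subseteq> r"
  unfolding flip_new_triangles_def phi_def by auto

lemma marked_step:
  assumes "marked T F R j U" "j < length F"
  shows "marked T F R (Suc j) ({t \<in> U. \<not> F ! j \<subseteq> t} \<union>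
    (if j \<in> R then {} else flip_new_triangles (tri_at T F j) (F ! j)))"
  unfolding marked_def
proof
  fix r assume r: "r \<in> tri_at T F (Suc j) - ({t \<in> U. \<not> F ! j \<subseteq> t} \<union>
    (if j \<in> R then {} else flip_new_triangles (tri_at T F j) (F ! j)))"
  show "\<exists>c\<in>R. c < Suc j \<and> phi T F c \<subseteq> r \<and> (\<forall>p. c < p \<and> p < Suc j \<longrightarrow> F ! p \<noteq> phi T F c)"
  proof (cases "r \<in> flip_new_triangles (tri_at T F j) (F ! j)")
    case True
    then have "j \<in> R"
      using r by (auto split: if_splits)
    then show ?thesis
      using phi_subset_flip_new_triangles[OF True] by auto
  next
    case False
    then have "r \<in> tri_at T F j - U" "\<not> F ! j \<subseteq> r"
      using r assms(2) by (auto simp: tri_at_Suc do_flip_eq)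
    then obtain c where "c \<in> R" "c < j" "phi T F c \<subseteq> r"
      "\<forall>p. c < p \<and> p < j \<longrightarrow> F ! p \<noteq> phi T F c"
      using assms(1) unfolding marked_def by blast
    moreover have "F ! j \<noteq> phi T F c"
      using \<open>phi T F c \<subseteq> r\<close> \<open>\<not> F ! j \<subseteq> r\<close> by auto
    ultimately show ?thesis
      by (metis less_Suc_eq)
  qed
qed

lemma untouched_marked:
  assumes "a \<in> R"
  shows "Suc (a + n) \<le> length F \<Longrightarrow> marked T F R (Suc (a + n)) (untouched T F R a n)"
proof (induction n)
  case 0
  have "marked T F R a (tri_at T F a)"
    unfolding marked_def by simp
  with 0 assms show ?case
    using marked_step[of T F R a "tri_at T F a"] by simp
next
  case (Suc n)
  then show ?case
    using marked_step[of T F R "Suc (a + n)" "untouched T F R a n"] by simp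
qed

context
  fixes T :: triang and F :: "edge list" and R :: "nat set"
  assumes R_closed: "adj T F `` R \<subseteq> R"
begin

text \<open>A flip outside R cannot touch a marked triangle: the marking flip would be adjacent to it.\<close>

lemma flipped_triangle_unmarked:
  assumes "marked T F R j U" "j < length F" "j \<notin> R" "t \<in> tri_at T F j" "F ! j \<subseteq> t"
  shows "t \<in> U"
proof (rule ccontr)
  assume "t \<notin> U"
  then obtain c where "c \<in> R" "c < j" "phi T F c \<subseteq> t"
    "\<forall>p. c < p \<and> p < j \<longrightarrow> F ! p \<noteq> phi T F c"
    using assms(1,4) unfolding marked_def by blast
  then have "(c, j) \<in> adj T F"
    using assms(2,4,5) unfolding adj_def share_triangle_def by blast
  then show False
    using R_closed \<open>c \<in> R\<close> assms(3) by blast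
qed

lemma untouched_covered:
  assumes "valid T F" "interior_disjoint_triangles T" "a \<in> R"
  shows "Suc (a + n) \<le> length F \<Longrightarrow>
    (\<Union>t \<in> untouched T F R a n. convex hull t) \<subseteq> (\<Union>t \<in> untouched T F R a 0. convex hull t)"
proof (induction n)
  case (Suc n)
  let ?j = "Suc (a + n)"
  have j: "?j < length F"
    using Suc.prems by simp
  have disjoint: "interior_disjoint_triangles (tri_at T F ?j)"
    using interior_disjoint_triangles_tri_at[OF assms(2,1)] j by simp
  have marked: "marked T F R ?j (untouched T F R a n)"
    using untouched_marked[OF assms(3)] j by simp
  have "convex hull t \<subseteq> (\<Union>t \<in> untouched T F R a n. convex hull t)"
    if "?j \<notin> R" "t \<in> flip_new_triangles (tri_at T F ?j) (F ! ?j)" for t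
  proof -
    have "{s \<in> tri_at T F ?j. F ! ?j \<subseteq> s} \<subseteq> untouched T F R a n"
      using flipped_triangle_unmarked[OF marked j that(1)] by blast
    then show ?thesis
      using flip_new_triangles_covered[OF disjoint admissible_tri_at[OF assms(1) j] that(2)] by blast
  qed
  then have "(\<Union>t \<in> untouched T F R a (Suc n). convex hull t) \<subseteq>
      (\<Union>t \<in> untouched T F R a n. convex hull t)"
    by (auto split: if_splits)
  moreover have "Suc (a + n) \<le> length F"
    using Suc.prems by simp
  ultimately show ?case
    using Suc.IH by blast
qed simp


lemma flipped_triangle_in_untouched_region:
  assumes "valid T F" "interior_disjoint_triangles T" "a \<in> R" "h \<notin> R" "a < h" "h < length F"
    and "s \<in> tri_at T F h" "F ! h \<subseteq> s"
  shows "convex hull s \<subseteq> (\<Union>t \<in> {t \<in> tri_at T F a. \<not> F ! a \<subseteq> t}. convex hull t)"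
proof -
  define n where "n = h - Suc a"
  have h: "Suc (a + n) = h"
    using assms(5) unfolding n_def by simp
  then have "marked T F R h (untouched T F R a n)"
    using untouched_marked[OF assms(3), of n] assms(6) by simp
  then have "s \<in> untouched T F R a n"
    using flipped_triangle_unmarked assms(4,6-8) by blast
  then show ?thesis
    using untouched_covered[OF assms(1-3), of n] h assms(6) by auto
qed

end

lemma triangle_at_flipped_edge_not_in_rest:
  assumes T: "interior_disjoint_triangles T" and adm: "admissible T e"
    and s: "e \<subseteq> s" "card s = 3" "\<not> collinear s"
  shows "\<not> convex hull s \<subseteq> (\<Union>t \<in> {t \<in> T. \<not> e \<subseteq> t}. convex hull t)"
proof
  assume s_region: "convex hull s \<subseteq> (\<Union>t \<in> {t \<in> T. \<not> e \<subseteq> t}. convex hull t)"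
  obtain c d p q where e: "e = {c, d}" "c \<noteq> d"
    and at_e: "{t \<in> T. e \<subseteq> t} = {{c, d, p}, {c, d, q}}"
    and opp: "det2 (d - c) (p - c) * det2 (d - c) (q - c) < 0"
    and "c \<notin> convex hull {d, p, q}" "d \<notin> convex hull {c, p, q}"
    and "flip_new_triangles T e = {{p, q, c}, {p, q, d}}"
    by (rule admissible_flip_shape[OF T adm])
  obtain z where sz: "s = {c, d, z}" and Dz: "det2 (d - c) (z - c) \<noteq> 0"
    using triangle_through_edge[OF s(2,3)] s(1) e by blast
  have "(0 < det2 (d - c) (p - c) \<and> det2 (d - c) (q - c) < 0) \<or>
      (det2 (d - c) (p - c) < 0 \<and> 0 < det2 (d - c) (q - c))"
    using opp by (simp add: mult_less_0_iff)
  moreover have "0 < det2 (d - c) (z - c) \<or> det2 (d - c) (z - c) < 0"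
    using Dz by linarith
  ultimately consider "0 < det2 (d - c) (p - c) * det2 (d - c) (z - c)"
    | "0 < det2 (d - c) (q - c) * det2 (d - c) (z - c)"
    by (metis mult_pos_pos mult_neg_neg)
  then obtain w where "w \<in> {p, q}" "0 < det2 (d - c) (w - c) * det2 (d - c) (z - c)"
  proof cases
    case 1
    then show ?thesis using that[of p] by simp
  next
    case 2
    then show ?thesis using that[of q] by simp
  qed
  then have "interior (convex hull {c, d, w}) \<inter> interior (convex hull s) \<noteq> {}"
    unfolding sz by (intro same_side_triangles_interiors_meet)
  then obtain x where x: "x \<in> interior (convex hull {c, d, w})" "x \<in> convex hull s"
    using interior_subset by blast
  then obtain r where r: "r \<in> T" "\<not> e \<subseteq> r" "x \<in> convex hull r"
    using s_region by blast
  have "{c, d, w} \<in> {t \<in> T. e \<subseteq> t}"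
    using \<open>w \<in> {p, q}\<close> unfolding at_e by auto
  then have w: "{c, d, w} \<in> T" "{c, d, w} \<noteq> r"
    using r(2) by auto
  have "interior (convex hull {c, d, w}) \<inter> interior (convex hull r) \<noteq> {}"
    using open_meets_triangle_imp_meets_interior[of r] interior_disjoint_trianglesD(1,2)[OF T r(1)]
      open_interior x(1) r(3) by blast
  then show False
    using interior_disjoint_trianglesD(3)[OF T w(1) r(1) w(2)] by blast
qed

lemma adj_path_between_equal_flips:
  assumes val: "valid T F" and T: "interior_disjoint_triangles T"
    and "a < h" "h < length F" "F ! a = F ! h"
  shows "(a, h) \<in> (adj T F)\<^sup>+"
proof (rule ccontr)
  assume no_path: "(a, h) \<notin> (adj T F)\<^sup>+"
  define R where "R = {j. j = a \<or> (a, j) \<in> (adj T F)\<^sup>+}"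
  have R_closed: "adj T F `` R \<subseteq> R"
    unfolding R_def by (auto intro: trancl_into_trancl r_into_trancl)
  have "a \<in> R" "h \<notin> R"
    using no_path \<open>a < h\<close> unfolding R_def by auto
  have "a < length F"
    using \<open>a < h\<close> \<open>h < length F\<close> by simp
  have Ta: "interior_disjoint_triangles (tri_at T F a)"
    and Th: "interior_disjoint_triangles (tri_at T F h)"
    using interior_disjoint_triangles_tri_at[OF T val] \<open>a < h\<close> \<open>h < length F\<close> by auto
  have "card {t \<in> tri_at T F h. F ! h \<subseteq> t} = 2"
    using admissible_tri_at[OF val \<open>h < length F\<close>] unfolding admissible_def interior_edge_def by auto
  then have "{t \<in> tri_at T F h. F ! h \<subseteq> t} \<noteq> {}"
    by (intro notI) simp
  then obtain s where s: "s \<in> tri_at T F h" "F ! h \<subseteq> s"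
    by blast
  have "convex hull s \<subseteq> (\<Union>t \<in> {t \<in> tri_at T F a. \<not> F ! a \<subseteq> t}. convex hull t)"
    using flipped_triangle_in_untouched_region[OF R_closed val T \<open>a \<in> R\<close> \<open>h \<notin> R\<close>]
      \<open>a < h\<close> \<open>h < length F\<close> s by blast
  moreover have "F ! a \<subseteq> s"
    using s(2) \<open>F ! a = F ! h\<close> by simp
  ultimately show False
    using triangle_at_flipped_edge_not_in_rest[OF Ta admissible_tri_at[OF val \<open>a < length F\<close>]]
      interior_disjoint_trianglesD(1,2)[OF Th s(1)] by blast
qed

lemma trancl_adj_within_component:
  assumes "(i, h) \<in> (adj T F)\<^sup>+" "i \<in> component T F i0"
  shows "(i, h) \<in> (adj T F \<inter> component T F i0 \<times> component T F i0)\<^sup>+"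
proof -
  have closed: "y \<in> component T F i0" if "x \<in> component T F i0" "(x, y) \<in> adj T F" for x y
  proof -
    have "y < length F"
      using that(2) unfolding adj_def by auto
    moreover have "(i0, y) \<in> (adj T F \<union> (adj T F)\<inverse>)\<^sup>*"
      using that unfolding component_def by (blast intro: rtrancl_into_rtrancl)
    ultimately show ?thesis
      unfolding component_def by blast
  qed
  from assms(1) have "(i, h) \<in> (adj T F \<inter> component T F i0 \<times> component T F i0)\<^sup>+ \<and>
      h \<in> component T F i0"
  proof (induction rule: trancl_induct)
    case (base y)
    then show ?case using assms(2) closed by blast
  next
    case (step y z)
    then show ?case
      using closed by (blast intro: trancl_into_trancl)
  qed
  then show ?thesis ..
qed

theorem lemma5:
  fixes P :: "pt set" and Ti Tf :: triang and k :: nat and F :: "edge list"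
    and C :: "nat set" and i h :: nat
  assumes "normalized P Ti Tf k F"
    and "C \<in> components Ti F"
    and "i \<in> C" and "h \<in> C" and "i < h"
    and "F ! i = F ! h"
  shows "(i, h) \<in> (adj Ti F \<inter> (C \<times> C))\<^sup>+"
proof -
  have "triangulation P Ti" "valid Ti F"
    using assms(1) unfolding normalized_def is_solution_def by auto
  obtain i0 where C: "C = component Ti F i0"
    using assms(2) unfolding components_def by auto
  have "h < length F"
    using assms(4) unfolding C component_def by auto
  then have "(i, h) \<in> (adj Ti F)\<^sup>+"
    using adj_path_between_equal_flips triangulation_imp_interior_disjoint_triangles
      \<open>triangulation P Ti\<close> \<open>valid Ti F\<close> assms(5,6) by blast
  then show ?thesis
    using trancl_adj_within_component assms(3) unfolding C by blast
qed

end
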